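(* Let $S$ be an atomic base, let $\Gamma = x_1:A_1,\dots,x_n:A_n$ be a context and let $t$ be a term with $tFV(t)\subseteq\{x_1,\dots,x_n\}$. If the term $t$ of $A$ from $\Gamma$ is E-valid (with respect to $S$), then there is a normal proof-term $s$ (with respect to $S$) such that $t\twoheadrightarrow s$ and $\Gamma\vdash s:A$ is derivable in $\mathbf{IL}_{\mathbf{at}}$.
   Context: System $\mathbf{IL}_{\mathbf{at}}$ (atomic second-order intuitionistic propositional logic). Formulas: $A,B ::= X \mid A\to B \mid \forall X.A$, where $X$ ranges over atoms (propositional variables). Terms: $t,s ::= x \mid c^A \mid \lambda x.t \mid ts \mid \Lambda X.t \mid tX$, where $x$ ranges over term-variables, $c^A$ is a term-constant for each formula $A$, and in $tX$ the argument is an atom. Terms and formulas are taken up to $\alpha$-equivalence; $t[x:=s]$, $t[X:=Y]$, $A[X:=B]$ are capture-avoiding substitutions; $t[\vec{t_i}]$ denotes the simultaneous substitution $t[x_1:=t_1,\dots,x_n:=t_n]$. $tFV(t)$ is the set of free term-variables of $t$, $FV(t)$ the set of free term- and propositional variables. A term is closed if it has no free term-variable. A context is a finite set $x_1:A_1,\dots,x_n:A_n$ with distinct term-variables; $PFV(\Gamma)$ is the set of propositional variables free in $A_1,\dots,A_n$. $\Gamma\vdash t:A$ is derivable if generated by: $\Gamma,x:A\vdash x:A$; $\Gamma\vdash c^A:A$; from $\Gamma,x:A\vdash t:B$ infer $\Gamma\vdash\lambda x.t:A\to B$; from $\Gamma\vdash t:A\to B$ and $\Gamma\vdash s:A$ infer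 $\Gamma\vdash ts:B$; from $\Gamma\vdash t:A$ with $X\notin PFV(\Gamma)$ infer $\Gamma\vdash\Lambda X.t:\forall X.A$; from $\Gamma\vdash t:\forall X.A$ infer $\Gamma\vdash tY:A[X:=Y]$ for any atom $Y$. $\beta$-reduction $\to_\beta$: $(\lambda x.t)s\to_\beta t[x:=s]$, $(\Lambda X.t)Y\to_\beta t[X:=Y]$, closed under taking subterms in any position (application function/argument, under $\lambda$ and under $\Lambda$). A term is normal if it contains no redex (left-hand side of these two rules). $\twoheadrightarrow$ is the reflexive-transitive closure of $\to_\beta$. An atomic base $S$ is a set of term-constants $c^X$ for atoms $X$. A proof-term is a term in which no term-constant occurs other than those $c^X\in S$. qE-validity: (1) a closed term $t$ of an atom $X$ is qE-valid iff $t\twoheadrightarrow s$ for some normal $s$ with $\vdash s:X$ derivable; (2) a closed term $t$ of $B\to C$ is qE-valid iff $ts$ of $C$ is qE-valid for every qE-valid closed term $s$ of $B$; (3) a closed term $t$ of $\forall X.A$ is qE-valid iff $tY$ of $A[X:=Y]$ is qE-valid for every atom $Y$; (4) a term $t$ of $A$ from $x_1:A_1,\dots,x_n:A_n$ with $tFV(t)\subseteq\{x_1,\dots,x_n\}$ is qE-valid iff $t[\vec{t_i}]$ of $A$ is qE-valid for all qE-valid closed terms $t_i$ of $A_i$ ($1\le i\le n$). A term is E-valid iff it is a proof-term and qE-valid. *)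

theory Defs
  imports Main
begin

text \<open>System IL_at in locally de Bruijn style: bound atoms and bound term-variables
are de Bruijn indices; this represents terms and formulas up to alpha-equivalence.
Free atoms are the atom indices not bound by an enclosing binder (index minus depth);
free term-variables likewise.\<close>

datatype form = Atom nat | Imp form form | All form

datatype trm = Var nat | Const form | Lam trm | App trm trm | TLam trm | TApp trm nat

definition upr :: "(nat \<Rightarrow> nat) \<Rightarrow> nat \<Rightarrow> nat" where
  "upr f = (\<lambda>n. case n of 0 \<Rightarrow> 0 | Suc m \<Rightarrow> Suc (f m))"

fun renF :: "(nat \<Rightarrow> nat) \<Rightarrow> form \<Rightarrow> form" where
  "renF f (Atom n) = Atom (f n)"
| "renF f (Imp A B) = Imp (renF f A) (renF f B)"
| "renF f (All A) = All (renF (upr f) A)"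

lemma size_renF[simp]: "size (renF f A) = size A"
  by (induction A arbitrary: f) auto

text \<open>instF Y A: for the body A of All A, this is A[X:=Y] (X the bound atom).\<close>
definition instF :: "nat \<Rightarrow> form \<Rightarrow> form" where
  "instF Y A = renF (\<lambda>n. case n of 0 \<Rightarrow> Y | Suc m \<Rightarrow> m) A"

lemma size_instF[simp]: "size (instF Y A) = size A"
  by (simp add: instF_def)

fun renT :: "(nat \<Rightarrow> nat) \<Rightarrow> trm \<Rightarrow> trm" where
  "renT f (Var i) = Var i"
| "renT f (Const A) = Const (renF f A)"
| "renT f (Lam t) = Lam (renT f t)"
| "renT f (App t s) = App (renT f t) (renT f s)"
| "renT f (TLam t) = TLam (renT (upr f) t)"
| "renT f (TApp t Y) = TApp (renT f t) (f Y)"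

fun renV :: "(nat \<Rightarrow> nat) \<Rightarrow> trm \<Rightarrow> trm" where
  "renV f (Var i) = Var (f i)"
| "renV f (Const A) = Const A"
| "renV f (Lam t) = Lam (renV (upr f) t)"
| "renV f (App t s) = App (renV f t) (renV f s)"
| "renV f (TLam t) = TLam (renV f t)"
| "renV f (TApp t Y) = TApp (renV f t) Y"

fun substV :: "(nat \<Rightarrow> trm) \<Rightarrow> trm \<Rightarrow> trm" where
  "substV \<sigma> (Var i) = \<sigma> i"
| "substV \<sigma> (Const A) = Const A"
| "substV \<sigma> (Lam t) = Lam (substV (\<lambda>i. case i of 0 \<Rightarrow> Var 0 | Suc j \<Rightarrow> renV Suc (\<sigma> j)) t)"
| "substV \<sigma> (App t s) = App (substV \<sigma> t) (substV \<sigma> s)"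
| "substV \<sigma> (TLam t) = TLam (substV (\<lambda>i. renT Suc (\<sigma> i)) t)"
| "substV \<sigma> (TApp t Y) = TApp (substV \<sigma> t) Y"

fun tfv :: "trm \<Rightarrow> nat set" where
  "tfv (Var i) = {i}"
| "tfv (Const A) = {}"
| "tfv (Lam t) = {i. Suc i \<in> tfv t}"
| "tfv (App t s) = tfv t \<union> tfv s"
| "tfv (TLam t) = tfv t"
| "tfv (TApp t Y) = tfv t"

definition closed :: "trm \<Rightarrow> bool" where
  "closed t \<longleftrightarrow> tfv t = {}"

text \<open>Typing judgement Gamma |- t : A; the context is a list, position i typing Var i.
The eigenvariable condition for TLam is realised by shifting the context.\<close>
inductive typing :: "form list \<Rightarrow> trm \<Rightarrow> form \<Rightarrow> bool" where
  tVar: "i < length \<Gamma> \<Longrightarrow> typing \<Gamma> (Var i) (\<Gamma> ! i)"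
| tConst: "typing \<Gamma> (Const A) A"
| tLam: "typing (A # \<Gamma>) t B \<Longrightarrow> typing \<Gamma> (Lam t) (Imp A B)"
| tApp: "typing \<Gamma> t (Imp A B) \<Longrightarrow> typing \<Gamma> s A \<Longrightarrow> typing \<Gamma> (App t s) B"
| tTLam: "typing (map (renF Suc) \<Gamma>) t A \<Longrightarrow> typing \<Gamma> (TLam t) (All A)"
| tTApp: "typing \<Gamma> t (All A) \<Longrightarrow> typing \<Gamma> (TApp t Y) (instF Y A)"

inductive beta :: "trm \<Rightarrow> trm \<Rightarrow> bool" where
  bLam: "beta (App (Lam t) s) (substV (\<lambda>i. case i of 0 \<Rightarrow> s | Suc j \<Rightarrow> Var j) t)"
| bTLam: "beta (TApp (TLam t) Y) (renT (\<lambda>n. case n of 0 \<Rightarrow> Y | Suc m \<Rightarrow> m) t)"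
| cAppL: "beta t t' \<Longrightarrow> beta (App t s) (App t' s)"
| cAppR: "beta s s' \<Longrightarrow> beta (App t s) (App t s')"
| cLam: "beta t t' \<Longrightarrow> beta (Lam t) (Lam t')"
| cTLam: "beta t t' \<Longrightarrow> beta (TLam t) (TLam t')"
| cTApp: "beta t t' \<Longrightarrow> beta (TApp t Y) (TApp t' Y)"

abbreviation betas :: "trm \<Rightarrow> trm \<Rightarrow> bool" where
  "betas \<equiv> beta\<^sup>*\<^sup>*"

fun normal :: "trm \<Rightarrow> bool" where
  "normal (Var i) = True"
| "normal (Const A) = True"
| "normal (Lam t) = normal t"
| "normal (App t s) = (normal t \<and> normal s \<and> (\<forall>u. t \<noteq> Lam u))"
| "normal (TLam t) = normal t"
| "normal (TApp t Y) = (normal t \<and> (\<forall>u. t \<noteq> TLam u))"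

text \<open>Proof-terms w.r.t. an atomic base S (S = set of atoms X with c^X in the base):
every constant occurring is c^X for a free atom X (index minus binder depth d) with X in S.\<close>
fun ptd :: "nat set \<Rightarrow> nat \<Rightarrow> trm \<Rightarrow> bool" where
  "ptd S d (Var i) = True"
| "ptd S d (Const A) = (\<exists>X. A = Atom X \<and> d \<le> X \<and> X - d \<in> S)"
| "ptd S d (Lam t) = ptd S d t"
| "ptd S d (App t s) = (ptd S d t \<and> ptd S d s)"
| "ptd S d (TLam t) = ptd S (Suc d) t"
| "ptd S d (TApp t Y) = ptd S d t"

definition proof_term :: "nat set \<Rightarrow> trm \<Rightarrow> bool" where
  "proof_term S t \<longleftrightarrow> ptd S 0 t"

function qEc :: "form \<Rightarrow> trm \<Rightarrow> bool" where
  "qEc (Atom X) t = (\<exists>s. betas t s \<and> normal s \<and> typing [] s (Atom X))"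
| "qEc (Imp B C) t = (\<forall>s. closed s \<longrightarrow> qEc B s \<longrightarrow> qEc C (App t s))"
| "qEc (All A) t = (\<forall>Y. qEc (instF Y A) (TApp t Y))"
  by pat_completeness auto
termination by (relation "measure (\<lambda>(A, t). size A)") auto

definition qEv :: "form list \<Rightarrow> trm \<Rightarrow> form \<Rightarrow> bool" where
  "qEv \<Gamma> t A \<longleftrightarrow> tfv t \<subseteq> {..<length \<Gamma>} \<and>
     (\<forall>ts. length ts = length \<Gamma> \<longrightarrow>
        (\<forall>i<length \<Gamma>. closed (ts ! i) \<and> qEc (\<Gamma> ! i) (ts ! i)) \<longrightarrow>
        qEc A (substV (\<lambda>i. if i < length ts then ts ! i else Var i) t))"

definition Evalid :: "nat set \<Rightarrow> form list \<Rightarrow> trm \<Rightarrow> form \<Rightarrow> bool" where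
  "Evalid S \<Gamma> t A \<longleftrightarrow> proof_term S t \<and> qEv \<Gamma> t A"

end

(* A closed qE-valid term of A reduces to a normal closed term of type A, and every normal neutral
   closed term of type A is qE-valid; both are proved together by induction on A. At an implication
   B -> C the constant c^B, being neutral and normal, is a qE-valid test argument; at a quantifier a
   fresh atom is used. The normal form of the resulting application is either stuck, and then its head
   already has the required type, or it comes from contracting a head redex, whose body is then
   typed by undoing the substitution.
   For the theorem, substitute the constants c^(A_i) for the x_i. Substituting constants creates no
   redexes, so the reduction of t[c] to normal form comes from a reduction t ->> s; the constants can
   be traded back for the variables in the typing derivation of s[c], and reduction preserves
   proof-terms. *)

theory Submission
  imports Defs
begin

section \<open>Renaming and substitution\<close>

lemma upr_simps [simp]: "upr f 0 = 0" "upr f (Suc n) = Suc (f n)"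
  by (simp_all add: upr_def)

lemma upr_comp [simp]: "upr f (upr g n) = upr (\<lambda>n. f (g n)) n"
  by (cases n) simp_all

lemma upr_id [simp]: "upr (\<lambda>n. n) = (\<lambda>n. n)"
  by (simp add: fun_eq_iff upr_def split: nat.split)

lemma renF_comp: "renF f (renF g A) = renF (\<lambda>n. f (g n)) A"
  by (induction A arbitrary: f g) simp_all

lemma renF_id [simp]: "renF (\<lambda>n. n) A = A"
  by (induction A) simp_all

lemma renT_comp: "renT f (renT g t) = renT (\<lambda>n. f (g n)) t"
  by (induction t arbitrary: f g) (simp_all add: renF_comp)

lemma renT_id [simp]: "renT (\<lambda>n. n) t = t"
  by (induction t) simp_all

lemma renV_comp: "renV f (renV g t) = renV (\<lambda>n. f (g n)) t"
  by (induction t arbitrary: f g) simp_all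

lemma renT_renV: "renT f (renV g t) = renV g (renT f t)"
  by (induction t arbitrary: f g) simp_all

abbreviation liftV :: "(nat \<Rightarrow> trm) \<Rightarrow> nat \<Rightarrow> trm" where
  "liftV \<sigma> \<equiv> \<lambda>i. case i of 0 \<Rightarrow> Var 0 | Suc j \<Rightarrow> renV Suc (\<sigma> j)"

abbreviation liftT :: "(nat \<Rightarrow> trm) \<Rightarrow> nat \<Rightarrow> trm" where
  "liftT \<sigma> \<equiv> \<lambda>i. renT Suc (\<sigma> i)"

abbreviation subst1 :: "trm \<Rightarrow> nat \<Rightarrow> trm" where
  "subst1 s \<equiv> \<lambda>i. case i of 0 \<Rightarrow> s | Suc j \<Rightarrow> Var j"

abbreviation inst_atom :: "nat \<Rightarrow> nat \<Rightarrow> nat" where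
  "inst_atom Y \<equiv> \<lambda>n. case n of 0 \<Rightarrow> Y | Suc m \<Rightarrow> m"

lemma substV_renV: "substV \<sigma> (renV f t) = substV (\<lambda>i. \<sigma> (f i)) t"
proof (induction t arbitrary: \<sigma> f)
  case (Lam t)
  have "liftV \<sigma> (upr f i) = liftV (\<lambda>i. \<sigma> (f i)) i" for i
    by (cases i) simp_all
  with Lam show ?case by simp
qed simp_all

lemma renV_substV: "renV f (substV \<sigma> t) = substV (\<lambda>i. renV f (\<sigma> i)) t"
proof (induction t arbitrary: \<sigma> f)
  case (Lam t)
  have "renV (upr f) (liftV \<sigma> i) = liftV (\<lambda>i. renV f (\<sigma> i)) i" for i
    by (cases i) (simp_all add: renV_comp)
  with Lam show ?case by simp
qed (simp_all add: renT_renV)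

lemma renT_substV: "renT g (substV \<sigma> t) = substV (\<lambda>i. renT g (\<sigma> i)) (renT g t)"
proof (induction t arbitrary: \<sigma> g)
  case (Lam t)
  have "renT g (liftV \<sigma> i) = liftV (\<lambda>i. renT g (\<sigma> i)) i" for i
    by (cases i) (simp_all add: renT_renV)
  with Lam show ?case by simp
qed (simp_all add: renT_comp)

lemma substV_substV: "substV \<tau> (substV \<rho> t) = substV (\<lambda>i. substV \<tau> (\<rho> i)) t"
proof (induction t arbitrary: \<tau> \<rho>)
  case (Lam t)
  have "substV (liftV \<tau>) (liftV \<rho> i) = liftV (\<lambda>i. substV \<tau> (\<rho> i)) i" for i
    by (cases i) (simp_all add: substV_renV renV_substV)
  with Lam show ?case by simp
qed (simp_all add: renT_substV)

lemma substV_Var [simp]: "substV Var t = t"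
proof (induction t)
  case (Lam t)
  have "liftV Var = Var"
    by (simp add: fun_eq_iff split: nat.split)
  with Lam show ?case by (simp only: substV.simps)
qed simp_all

lemma substV_subst1:
  "substV \<sigma> (substV (subst1 s) t) = substV (subst1 (substV \<sigma> s)) (substV (liftV \<sigma>) t)"
  unfolding substV_substV by (rule arg_cong[where f = "\<lambda>\<sigma>. substV \<sigma> t"])
    (simp add: fun_eq_iff substV_renV split: nat.split)

lemma substV_inst_atom:
  "substV \<sigma> (renT (inst_atom Y) t) = renT (inst_atom Y) (substV (liftT \<sigma>) t)"
  by (simp add: renT_substV renT_comp)

lemma renT_subst1:
  "renT \<rho> (substV (subst1 s) t) = substV (subst1 (renT \<rho> s)) (renT \<rho> t)"
  unfolding renT_substV by (rule arg_cong[where f = "\<lambda>\<sigma>. substV \<sigma> (renT \<rho> t)"])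
    (simp add: fun_eq_iff split: nat.split)

lemma renT_inst_atom:
  "renT \<rho> (renT (inst_atom Y) t) = renT (inst_atom (\<rho> Y)) (renT (upr \<rho>) t)"
  unfolding renT_comp by (rule arg_cong[where f = "\<lambda>\<rho>. renT \<rho> t"])
    (simp add: fun_eq_iff split: nat.split)

section \<open>Reduction\<close>

lemma rtranclp_reflect:
  assumes "\<And>x z. r (f x) z \<Longrightarrow> \<exists>y. r x y \<and> z = f y"
    and "r\<^sup>*\<^sup>* (f x) z"
  shows "\<exists>y. r\<^sup>*\<^sup>* x y \<and> z = f y"
  using assms(2)
proof induction
  case (step z z')
  then obtain y where "r\<^sup>*\<^sup>* x y" "z = f y" by blast
  with step.hyps(2) show ?case
    by (metis assms(1) rtranclp.rtrancl_into_rtrancl)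
qed blast

lemma
  assumes "betas t t'"
  shows betas_AppL: "betas (App t s) (App t' s)"
    and betas_AppR: "betas (App s t) (App s t')"
    and betas_Lam: "betas (Lam t) (Lam t')"
    and betas_TLam: "betas (TLam t) (TLam t')"
    and betas_TApp: "betas (TApp t Y) (TApp t' Y)"
  using assms by (induction rule: rtranclp_induct) (auto intro: rtranclp.rtrancl_into_rtrancl beta.intros)

inductive_cases beta_VarE [elim!]: "beta (Var i) u"
inductive_cases beta_ConstE [elim!]: "beta (Const A) u"
inductive_cases beta_LamE [elim!]: "beta (Lam t) u"
inductive_cases beta_TLamE [elim!]: "beta (TLam t) u"
inductive_cases beta_AppE [consumes 1, case_names bLam cAppL cAppR]: "beta (App t s) u"
inductive_cases beta_TAppE [consumes 1, case_names bTLam cTApp]: "beta (TApp t Y) u"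

text \<open>Substituting variables and constants creates no redexes.\<close>

definition inert :: "(nat \<Rightarrow> trm) \<Rightarrow> bool" where
  "inert \<sigma> \<longleftrightarrow> (\<forall>i. (\<exists>k. \<sigma> i = Var k) \<or> (\<exists>A. \<sigma> i = Const A))"

lemma inert_liftV: "inert \<sigma> \<Longrightarrow> inert (liftV \<sigma>)"
  unfolding inert_def by (auto split: nat.split) (metis renV.simps(1,2))

lemma inert_liftT: "inert \<sigma> \<Longrightarrow> inert (liftT \<sigma>)"
  unfolding inert_def by (metis renT.simps(1,2))

lemma
  assumes "inert \<sigma>"
  shows inert_not_Lam: "\<sigma> i \<noteq> Lam r" and inert_not_TLam: "\<sigma> i \<noteq> TLam r"
  using assms unfolding inert_def by (metis trm.distinct)+

lemma beta_substV_inertD: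
  "beta (substV \<sigma> t) u \<Longrightarrow> inert \<sigma> \<Longrightarrow> \<exists>t'. beta t t' \<and> u = substV \<sigma> t'"
proof (induction t arbitrary: \<sigma> u)
  case (Var x)
  then have "(\<exists>k. \<sigma> x = Var k) \<or> (\<exists>A. \<sigma> x = Const A)"
    unfolding inert_def by blast
  with Var.prems(1) show ?case by auto
next
  case (Lam t)
  with inert_liftV[OF Lam.prems(2)] show ?case by (fastforce intro: beta.cLam)
next
  case (TLam t)
  with inert_liftT[OF TLam.prems(2)] show ?case by (fastforce intro: beta.cTLam)
next
  case (App t1 t2)
  from App.prems(1) have "beta (App (substV \<sigma> t1) (substV \<sigma> t2)) u" by simp
  then show ?case
  proof (cases rule: beta_AppE)
    case (bLam r)
    with App.prems(2) obtain r1 where "t1 = Lam r1" "r = substV (liftV \<sigma>) r1"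
      by (cases t1) (auto simp: inert_not_Lam inert_not_TLam)
    with bLam show ?thesis by (metis beta.bLam substV_subst1)
  qed (use App in \<open>metis beta.cAppL beta.cAppR substV.simps(4)\<close>)+
next
  case (TApp t1 Y)
  from TApp.prems(1) have "beta (TApp (substV \<sigma> t1) Y) u" by simp
  then show ?case
  proof (cases rule: beta_TAppE)
    case (bTLam r)
    with TApp.prems(2) obtain r1 where "t1 = TLam r1" "r = substV (liftT \<sigma>) r1"
      by (cases t1) (auto simp: inert_not_Lam inert_not_TLam)
    with bTLam show ?thesis by (metis beta.bTLam substV_inst_atom)
  qed (use TApp in \<open>metis beta.cTApp substV.simps(6)\<close>)
qed auto

lemma betas_substV_inertD:
  "betas (substV \<sigma> t) u \<Longrightarrow> inert \<sigma> \<Longrightarrow> \<exists>t'. betas t t' \<and> u = substV \<sigma> t'"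
  using rtranclp_reflect[where f = "substV \<sigma>"] beta_substV_inertD by blast

lemma beta_renTD: "beta (renT \<rho> t) u \<Longrightarrow> \<exists>t'. beta t t' \<and> u = renT \<rho> t'"
proof (induction t arbitrary: \<rho> u)
  case (Lam t)
  then show ?case by (fastforce intro: beta.cLam)
next
  case (TLam t)
  then show ?case by (fastforce intro: beta.cTLam)
next
  case (App t1 t2)
  from App.prems have "beta (App (renT \<rho> t1) (renT \<rho> t2)) u" by simp
  then show ?case
  proof (cases rule: beta_AppE)
    case (bLam r)
    then obtain r1 where "t1 = Lam r1" "r = renT \<rho> r1"
      by (cases t1) auto
    with bLam show ?thesis by (metis beta.bLam renT_subst1)
  qed (use App in \<open>metis beta.cAppL beta.cAppR renT.simps(4)\<close>)+
next
  case (TApp t1 Y)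
  from TApp.prems have "beta (TApp (renT \<rho> t1) (\<rho> Y)) u" by simp
  then show ?case
  proof (cases rule: beta_TAppE)
    case (bTLam r)
    then obtain r1 where "t1 = TLam r1" "r = renT (upr \<rho>) r1"
      by (cases t1) auto
    with bTLam show ?thesis by (metis beta.bTLam renT_inst_atom)
  qed (use TApp in \<open>metis beta.cTApp renT.simps(6)\<close>)
qed auto

lemma betas_renTD: "betas (renT \<rho> t) u \<Longrightarrow> \<exists>t'. betas t t' \<and> u = renT \<rho> t'"
  using rtranclp_reflect[where f = "renT \<rho>"] beta_renTD by blast

lemma normal_substVD: "normal (substV \<sigma> t) \<Longrightarrow> normal t"
proof (induction t arbitrary: \<sigma>)
  case (App t1 t2)
  then show ?case by (cases t1) auto
next
  case (TApp t1 Y)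
  then show ?case by (cases t1) auto
qed auto

lemma normal_renTD: "normal (renT \<rho> t) \<Longrightarrow> normal t"
proof (induction t arbitrary: \<rho>)
  case (App t1 t2)
  then show ?case by (cases t1) auto
next
  case (TApp t1 Y)
  then show ?case by (cases t1) auto
qed auto

section \<open>Typing\<close>

inductive_cases typing_VarE [elim!]: "typing \<Gamma> (Var i) A"
inductive_cases typing_ConstE [elim!]: "typing \<Gamma> (Const B) A"
inductive_cases typing_LamE [elim!]: "typing \<Gamma> (Lam t) A"
inductive_cases typing_AppE [elim!]: "typing \<Gamma> (App t s) A"
inductive_cases typing_TLamE [elim!]: "typing \<Gamma> (TLam t) A"
inductive_cases typing_TAppE [elim!]: "typing \<Gamma> (TApp t Y) A"

lemma renF_instF: "renF f (instF Y A) = instF (f Y) (renF (upr f) A)"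
  unfolding instF_def renF_comp by (rule arg_cong[where f = "\<lambda>f. renF f A"])
    (simp add: fun_eq_iff split: nat.split)

lemma typing_renT: "typing \<Gamma> t A \<Longrightarrow> typing (map (renF f) \<Gamma>) (renT f t) (renF f A)"
proof (induction arbitrary: f rule: typing.induct)
  case (tTLam \<Gamma> t A)
  from tTLam.IH[of "upr f"]
  have "typing (map (renF Suc) (map (renF f) \<Gamma>)) (renT (upr f) t) (renF (upr f) A)"
    by (simp add: renF_comp comp_def)
  then show ?case by (simp add: typing.tTLam)
next
  case (tVar i \<Gamma>)
  then show ?case using typing.tVar[of i "map (renF f) \<Gamma>"] by simp
qed (auto simp: renF_instF intro: typing.intros)

text \<open>Variables beyond \<open>\<Delta>\<close> are untypable in \<open>\<Delta>\<close>, hence unconstrained.\<close>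

definition reflects_typing :: "form list \<Rightarrow> form list \<Rightarrow> (nat \<Rightarrow> trm) \<Rightarrow> bool" where
  "reflects_typing \<Gamma> \<Delta> \<sigma> \<longleftrightarrow> (\<forall>i.
     (\<exists>k. \<sigma> i = Var k \<and> (k < length \<Delta> \<longrightarrow> i < length \<Gamma> \<and> \<Delta> ! k = \<Gamma> ! i)) \<or>
     (i < length \<Gamma> \<and> \<sigma> i = Const (\<Gamma> ! i)))"

lemma reflects_typing_liftV:
  assumes "reflects_typing \<Gamma> \<Delta> \<sigma>"
  shows "reflects_typing (A # \<Gamma>) (A # \<Delta>) (liftV \<sigma>)"
  unfolding reflects_typing_def
  apply (intro allI)
  subgoal for i
    using assms[unfolded reflects_typing_def, rule_format, of "i - 1"] by (cases i) auto
  done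

lemma reflects_typing_liftT:
  assumes "reflects_typing \<Gamma> \<Delta> \<sigma>"
  shows "reflects_typing (map (renF Suc) \<Gamma>) (map (renF Suc) \<Delta>) (liftT \<sigma>)"
  unfolding reflects_typing_def
  apply (intro allI)
  subgoal for i
    using assms[unfolded reflects_typing_def, rule_format, of i] by auto
  done

lemma typing_substV_reflect:
  "typing \<Delta> (substV \<sigma> t) B \<Longrightarrow> reflects_typing \<Gamma> \<Delta> \<sigma> \<Longrightarrow> typing \<Gamma> t B"
proof (induction t arbitrary: \<Gamma> \<Delta> \<sigma> B)
  case (Var i)
  from Var.prems(2) have "(\<exists>k. \<sigma> i = Var k \<and> (k < length \<Delta> \<longrightarrow> i < length \<Gamma> \<and> \<Delta> ! k = \<Gamma> ! i)) \<or>
      (i < length \<Gamma> \<and> \<sigma> i = Const (\<Gamma> ! i))"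
    unfolding reflects_typing_def by blast
  with Var.prems(1) show ?case by (auto simp: typing.tVar)
next
  case (Lam t)
  from Lam.prems(1) obtain A C
    where "B = Imp A C" "typing (A # \<Delta>) (substV (liftV \<sigma>) t) C" by auto
  with Lam.IH reflects_typing_liftV[OF Lam.prems(2)] show ?case by (auto intro: typing.tLam)
next
  case (TLam t)
  from TLam.prems(1) obtain C
    where "B = All C" "typing (map (renF Suc) \<Delta>) (substV (liftT \<sigma>) t) C" by auto
  with TLam.IH reflects_typing_liftT[OF TLam.prems(2)] show ?case by (auto intro: typing.tTLam)
next
  case (App t1 t2)
  from App.prems(1) obtain A
    where "typing \<Delta> (substV \<sigma> t1) (Imp A B)" "typing \<Delta> (substV \<sigma> t2) A" by auto
  with App.IH App.prems(2) show ?case by (meson typing.tApp)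
next
  case (TApp t Y)
  from TApp.prems(1) obtain C where "typing \<Delta> (substV \<sigma> t) (All C)" "B = instF Y C" by auto
  with TApp.IH TApp.prems(2) show ?case by (metis typing.tTApp)
qed (auto intro: typing.tConst)

section \<open>Free atoms and proof-terms\<close>

fun free_atomsF :: "form \<Rightarrow> nat set" where
  "free_atomsF (Atom n) = {n}"
| "free_atomsF (Imp A B) = free_atomsF A \<union> free_atomsF B"
| "free_atomsF (All A) = {n. Suc n \<in> free_atomsF A}"

fun free_atomsT :: "trm \<Rightarrow> nat set" where
  "free_atomsT (Var i) = {}"
| "free_atomsT (Const A) = free_atomsF A"
| "free_atomsT (Lam t) = free_atomsT t"
| "free_atomsT (App t s) = free_atomsT t \<union> free_atomsT s"
| "free_atomsT (TLam t) = {n. Suc n \<in> free_atomsT t}"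
| "free_atomsT (TApp t Y) = insert Y (free_atomsT t)"

lemma finite_Suc_preimage: "finite S \<Longrightarrow> finite {n. Suc n \<in> S}"
  using finite_vimageI[of S Suc] by (simp add: vimage_def)

lemma finite_free_atomsT: "finite (free_atomsT t)"
proof -
  have "finite (free_atomsF A)" for A
    by (induction A) (auto intro: finite_Suc_preimage)
  then show ?thesis
    by (induction t) (auto intro: finite_Suc_preimage)
qed

lemma Suc_eq_upr_iff: "Suc n = upr f x \<longleftrightarrow> (\<exists>m. x = Suc m \<and> n = f m)"
  by (cases x) auto

lemma Suc_preimage_upr_image: "{n. Suc n \<in> upr f ` S} = f ` {n. Suc n \<in> S}"
  by (force simp: Suc_eq_upr_iff)

lemma free_atomsF_renF: "free_atomsF (renF f A) = f ` free_atomsF A"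
  by (induction A arbitrary: f) (auto simp: Suc_preimage_upr_image)

lemma free_atomsT_renT: "free_atomsT (renT f t) = f ` free_atomsT t"
  by (induction t arbitrary: f) (auto simp: Suc_preimage_upr_image free_atomsF_renF)

lemma free_atomsT_renV: "free_atomsT (renV f t) = free_atomsT t"
  by (induction t arbitrary: f) auto

lemma free_atomsT_substV: "free_atomsT (substV \<sigma> t) \<subseteq> free_atomsT t \<union> (\<Union>i. free_atomsT (\<sigma> i))"
proof (induction t arbitrary: \<sigma>)
  case (Lam t)
  then show ?case
    by (fastforce simp: free_atomsT_renV split: nat.splits)
next
  case (TLam t)
  then show ?case by (fastforce simp: free_atomsT_renT)
qed auto

lemma beta_free_atomsT: "beta t t' \<Longrightarrow> free_atomsT t' \<subseteq> free_atomsT t"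
proof (induction rule: beta.induct)
  case (bLam t s)
  show ?case
    using free_atomsT_substV[of "subst1 s" t] by (auto split: nat.splits)
qed (auto simp: free_atomsT_renT split: nat.splits)

lemma betas_free_atomsT: "betas t t' \<Longrightarrow> free_atomsT t' \<subseteq> free_atomsT t"
  by (induction rule: rtranclp_induct) (auto dest: beta_free_atomsT)

lemma renF_cong: "\<forall>n\<in>free_atomsF A. f n = g n \<Longrightarrow> renF f A = renF g A"
proof (induction A arbitrary: f g)
  case (All A)
  have "\<forall>n\<in>free_atomsF A. upr f n = upr g n"
    using All.prems by (auto split: nat.split simp: upr_def)
  with All.IH show ?case by simp
qed auto

lemma renT_cong: "\<forall>n\<in>free_atomsT t. f n = g n \<Longrightarrow> renT f t = renT g t"
proof (induction t arbitrary: f g)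
  case (TLam t)
  have "\<forall>n\<in>free_atomsT t. upr f n = upr g n"
    using TLam.prems by (auto split: nat.split simp: upr_def)
  with TLam.IH show ?case by simp
qed (auto intro: renF_cong)

lemma ptd_renV: "ptd S d (renV f t) = ptd S d t"
  by (induction t arbitrary: f d) auto

lemma ptd_renT:
  "ptd S d t \<Longrightarrow> (\<And>X. d \<le> X \<Longrightarrow> d' \<le> f X \<and> f X - d' = X - d) \<Longrightarrow> ptd S d' (renT f t)"
proof (induction t arbitrary: f d d')
  case (TLam t)
  have "Suc d' \<le> upr f X \<and> upr f X - Suc d' = X - Suc d" if "Suc d \<le> X" for X
    using that TLam.prems(2)[of "X - 1"] by (cases X) auto
  with TLam show ?case by simp
qed auto

lemma ptd_substV: "ptd S d t \<Longrightarrow> (\<And>i. ptd S d (\<sigma> i)) \<Longrightarrow> ptd S d (substV \<sigma> t)"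
proof (induction t arbitrary: d \<sigma>)
  case (Lam t)
  then show ?case by (simp add: ptd_renV split: nat.split)
next
  case (TLam t)
  have "ptd S (Suc d) (renT Suc (\<sigma> i))" for i
    by (rule ptd_renT[OF TLam.prems(2)]) simp
  with TLam show ?case by simp
qed auto

lemma beta_ptd: "beta t t' \<Longrightarrow> ptd S d t \<Longrightarrow> ptd S d t'"
proof (induction arbitrary: d rule: beta.induct)
  case (bLam t s)
  then show ?case by (auto intro!: ptd_substV split: nat.split)
next
  case (bTLam t Y)
  then show ?case by (auto intro!: ptd_renT split: nat.split)
qed auto

lemma betas_ptd: "betas t t' \<Longrightarrow> ptd S d t \<Longrightarrow> ptd S d t'"
  by (induction rule: rtranclp_induct) (auto dest: beta_ptd)

section \<open>Reification and reflection\<close>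

fun neutral :: "trm \<Rightarrow> bool" where
  "neutral (Var i) = True"
| "neutral (Const A) = True"
| "neutral (App t s) = neutral t"
| "neutral (TApp t Y) = neutral t"
| "neutral (Lam t) = False"
| "neutral (TLam t) = False"

lemma neutralI_normal:
  "normal t \<Longrightarrow> typing \<Gamma> t A \<Longrightarrow> \<forall>u. t \<noteq> Lam u \<Longrightarrow> \<forall>u. t \<noteq> TLam u \<Longrightarrow> neutral t"
proof (induction t arbitrary: A)
  case (App t1 t2)
  from App.prems(2) obtain B where "typing \<Gamma> t1 (Imp B A)" by auto
  then have "\<forall>u. t1 \<noteq> TLam u" by auto
  with App show ?case by auto
next
  case (TApp t1 Y)
  from TApp.prems(2) obtain B where "typing \<Gamma> t1 (All B)" by auto
  then have "\<forall>u. t1 \<noteq> Lam u" by auto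
  with TApp show ?case by auto
qed auto

lemma free_atomsF_instF: "free_atomsF (instF Y A) \<subseteq> insert Y (free_atomsF (All A))"
  unfolding instF_def free_atomsF_renF by (auto split: nat.splits)

lemma free_atomsF_type_of_neutral:
  "neutral n \<Longrightarrow> typing [] n A \<Longrightarrow> free_atomsF A \<subseteq> free_atomsT n"
proof (induction n arbitrary: A)
  case (App t1 t2)
  from App.prems(2) obtain B where "typing [] t1 (Imp B A)" by auto
  with App show ?case by force
next
  case (TApp t1 Y)
  from TApp.prems(2) obtain B where "typing [] t1 (All B)" "A = instF Y B" by auto
  with TApp show ?case using free_atomsF_instF[of Y B] by force
qed auto

lemma betas_App_cases [consumes 2, case_names stuck redex]:
  assumes "betas (App t s) u" and "\<forall>s'. \<not> beta s s'"
  obtains t' where "betas t t'" "u = App t' s"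
  | r where "betas t (Lam r)" "betas (substV (subst1 s) r) u"
proof -
  from assms(1)
  have "(\<exists>t'. betas t t' \<and> u = App t' s) \<or> (\<exists>r. betas t (Lam r) \<and> betas (substV (subst1 s) r) u)"
  proof (induction rule: rtranclp_induct)
    case (step u u')
    from step.IH show ?case
    proof (elim disjE exE conjE)
      fix t' assume "betas t t'" "u = App t' s"
      with step.hyps(2) assms(2) show ?case
        by (auto elim!: beta_AppE intro: rtranclp.rtrancl_into_rtrancl)
    next
      fix r assume "betas t (Lam r)" "betas (substV (subst1 s) r) u"
      with step.hyps(2) show ?case by (meson rtranclp.rtrancl_into_rtrancl)
    qed
  qed blast
  with that show thesis by blast
qed

lemma betas_TApp_cases [consumes 1, case_names stuck redex]:
  assumes "betas (TApp t Y) u"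
  obtains t' where "betas t t'" "u = TApp t' Y"
  | r where "betas t (TLam r)" "betas (renT (inst_atom Y) r) u"
proof -
  from assms
  have "(\<exists>t'. betas t t' \<and> u = TApp t' Y) \<or> (\<exists>r. betas t (TLam r) \<and> betas (renT (inst_atom Y) r) u)"
  proof (induction rule: rtranclp_induct)
    case (step u u')
    from step.IH show ?case
    proof (elim disjE exE conjE)
      fix t' assume "betas t t'" "u = TApp t' Y"
      with step.hyps(2) show ?case
        by (auto elim!: beta_TAppE intro: rtranclp.rtrancl_into_rtrancl)
    next
      fix r assume "betas t (TLam r)" "betas (renT (inst_atom Y) r) u"
      with step.hyps(2) show ?case by (meson rtranclp.rtrancl_into_rtrancl)
    qed
  qed blast
  with that show thesis by blast
qed

lemma qEc_betas_expand: "betas t t' \<Longrightarrow> qEc A t' \<Longrightarrow> qEc A t"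
proof (induction "size A" arbitrary: A t t' rule: less_induct)
  case less
  show ?case
  proof (cases A)
    case (Atom X)
    with less.prems show ?thesis by (auto intro: rtranclp_trans)
  next
    case (Imp B C)
    with less.prems less.hyps[of C] show ?thesis by (auto intro: betas_AppL)
  next
    case (All B)
    have "qEc (instF Y B) (TApp t Y)" for Y
      using less.prems less.hyps[of "instF Y B"] All by (auto intro: betas_TApp)
    with All show ?thesis by simp
  qed
qed

definition abstract_atom :: "nat \<Rightarrow> nat \<Rightarrow> nat" where
  "abstract_atom Y n = (if n = Y then 0 else Suc n)"

lemma abstract_inst_atom:
  "n \<in> S \<Longrightarrow> Y \<notin> {m. Suc m \<in> S} \<Longrightarrow> abstract_atom Y (inst_atom Y n) = n"
  by (cases n) (auto simp: abstract_atom_def)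

lemma renF_abstract_instF:
  assumes "Y \<notin> free_atomsF (All A)"
  shows "renF (abstract_atom Y) (instF Y A) = A"
proof -
  have "renF (abstract_atom Y) (instF Y A) = renF (\<lambda>n. abstract_atom Y (inst_atom Y n)) A"
    unfolding instF_def renF_comp ..
  also have "\<dots> = renF (\<lambda>n. n) A"
    using assms by (intro renF_cong) (simp add: abstract_inst_atom)
  finally show ?thesis by simp
qed

lemma renT_abstract_inst_atom:
  assumes "Y \<notin> free_atomsT (TLam t)"
  shows "renT (abstract_atom Y) (renT (inst_atom Y) t) = t"
proof -
  have "renT (abstract_atom Y) (renT (inst_atom Y) t) = renT (\<lambda>n. abstract_atom Y (inst_atom Y n)) t"
    by (rule renT_comp)
  also have "\<dots> = renT (\<lambda>n. n) t"
    using assms by (intro renT_cong) (simp add: abstract_inst_atom)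
  finally show ?thesis by simp
qed

definition has_typed_nf :: "form \<Rightarrow> trm \<Rightarrow> bool" where
  "has_typed_nf A t \<longleftrightarrow> (\<exists>s. betas t s \<and> normal s \<and> typing [] s A)"

lemma has_typed_nf_Imp:
  assumes valid: "qEc (Imp B C) t"
    and const_valid: "qEc B (Const B)"
    and reify_C: "\<And>u. qEc C u \<Longrightarrow> has_typed_nf C u"
  shows "has_typed_nf (Imp B C) t"
proof -
  from valid const_valid have "qEc C (App t (Const B))"
    by (simp add: closed_def)
  with reify_C obtain u
    where u: "betas (App t (Const B)) u" "normal u" "typing [] u C"
    unfolding has_typed_nf_def by blast
  have "\<forall>s'. \<not> beta (Const B) s'" by auto
  with u(1) show ?thesis
  proof (cases rule: betas_App_cases)
    case (stuck t')
    with u(2,3) show ?thesis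
      unfolding has_typed_nf_def by auto
  next
    case (redex r)
    have inert: "inert (subst1 (Const B))"
      by (auto simp: inert_def split: nat.split)
    from betas_substV_inertD[OF redex(2) inert] obtain r'
      where r': "betas r r'" "u = substV (subst1 (Const B)) r'" by blast
    have "reflects_typing [B] [] (subst1 (Const B))"
      by (auto simp: reflects_typing_def split: nat.split)
    with u(3) r'(2) have "typing [B] r' C"
      using typing_substV_reflect by blast
    moreover have "betas t (Lam r')"
      using redex(1) betas_Lam[OF r'(1)] by (rule rtranclp_trans)
    moreover have "normal r'"
      using u(2) r'(2) normal_substVD by blast
    ultimately show ?thesis
      unfolding has_typed_nf_def by (auto intro: typing.tLam)
  qed
qed

lemma has_typed_nf_All:
  assumes valid: "qEc (All B) t"
    and reify_inst: "\<And>Y u. qEc (instF Y B) u \<Longrightarrow> has_typed_nf (instF Y B) u"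
  shows "has_typed_nf (All B) t"
proof -
  obtain Y where "Y \<notin> free_atomsT (App t (Const (All B)))"
    using ex_new_if_finite[OF infinite_UNIV_nat finite_free_atomsT] by blast
  then have fresh: "Y \<notin> free_atomsT t" "Y \<notin> free_atomsF (All B)"
    by simp_all
  from valid have "qEc (instF Y B) (TApp t Y)"
    by simp
  with reify_inst obtain u
    where u: "betas (TApp t Y) u" "normal u" "typing [] u (instF Y B)"
    unfolding has_typed_nf_def by blast
  from u(1) show ?thesis
  proof (cases rule: betas_TApp_cases)
    case (stuck t')
    from u(3) stuck(2) obtain B' where B': "typing [] t' (All B')" "instF Y B' = instF Y B"
      by auto
    have "normal t'" "\<forall>v. t' \<noteq> TLam v"
      using u(2) stuck(2) by auto
    moreover have "\<forall>v. t' \<noteq> Lam v"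
      using B'(1) by auto
    ultimately have "neutral t'"
      using neutralI_normal B'(1) by blast
    then have "free_atomsF (All B') \<subseteq> free_atomsT t"
      using free_atomsF_type_of_neutral[OF _ B'(1)] betas_free_atomsT[OF stuck(1)] by blast
    with fresh(1) have "Y \<notin> free_atomsF (All B')"
      by blast
    then have "B' = renF (abstract_atom Y) (instF Y B')"
      by (rule renF_abstract_instF[symmetric])
    also have "\<dots> = B"
      using B'(2) fresh(2) by (simp add: renF_abstract_instF)
    finally show ?thesis
      using stuck(1) \<open>normal t'\<close> B'(1) unfolding has_typed_nf_def by blast
  next
    case (redex r)
    from betas_renTD[OF redex(2)] obtain r'
      where r': "betas r r'" "u = renT (inst_atom Y) r'" by blast
    have "free_atomsT (TLam r') \<subseteq> free_atomsT t"
      using betas_free_atomsT[OF redex(1)] betas_free_atomsT[OF betas_TLam[OF r'(1)]] by blast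
    with fresh(1) have "renT (abstract_atom Y) u = r'"
      using r'(2) renT_abstract_inst_atom by blast
    moreover have "renF (abstract_atom Y) (instF Y B) = B"
      using fresh(2) by (rule renF_abstract_instF)
    ultimately have "typing [] r' B"
      using typing_renT[OF u(3), of "abstract_atom Y"] by simp
    then have "typing [] (TLam r') (All B)"
      using typing.tTLam[of "[]" r' B] by simp
    moreover have "betas t (TLam r')"
      using redex(1) betas_TLam[OF r'(1)] by (rule rtranclp_trans)
    moreover have "normal r'"
      using u(2) r'(2) normal_renTD by blast
    ultimately show ?thesis
      unfolding has_typed_nf_def by (intro exI[of _ "TLam r'"]) simp
  qed
qed

lemma qEc_Imp_neutral:
  assumes n: "neutral n" "normal n" "typing [] n (Imp B C)"
    and reify_B: "\<And>u. qEc B u \<Longrightarrow> has_typed_nf B u"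
    and reflect_C: "\<And>u. neutral u \<Longrightarrow> normal u \<Longrightarrow> typing [] u C \<Longrightarrow> qEc C u"
  shows "qEc (Imp B C) n"
  unfolding qEc.simps
proof (intro allI impI)
  fix s
  assume "qEc B s"
  with reify_B obtain s' where s': "betas s s'" "normal s'" "typing [] s' B"
    unfolding has_typed_nf_def by blast
  have "neutral (App n s')"
    using n(1) by simp
  moreover have "normal (App n s')"
    using n(1,2) s'(2) by (cases n) auto
  moreover have "typing [] (App n s') C"
    using n(3) s'(3) by (rule typing.tApp)
  ultimately have "qEc C (App n s')"
    by (rule reflect_C)
  then show "qEc C (App n s)"
    using qEc_betas_expand betas_AppR[OF s'(1)] by blast
qed

lemma qEc_All_neutral:
  assumes n: "neutral n" "normal n" "typing [] n (All B)"
    and reflect_inst: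
      "\<And>Y u. neutral u \<Longrightarrow> normal u \<Longrightarrow> typing [] u (instF Y B) \<Longrightarrow> qEc (instF Y B) u"
  shows "qEc (All B) n"
  unfolding qEc.simps
proof
  fix Y
  have "normal (TApp n Y)"
    using n(1,2) by (cases n) auto
  with n show "qEc (instF Y B) (TApp n Y)"
    by (intro reflect_inst) (auto intro: typing.tTApp)
qed

lemma qEc_reify_reflect:
  "(\<forall>t. qEc A t \<longrightarrow> has_typed_nf A t) \<and>
   (\<forall>n. neutral n \<and> normal n \<and> typing [] n A \<longrightarrow> qEc A n)"
proof (induction "size A" arbitrary: A rule: less_induct)
  case less
  show ?case
  proof (cases A)
    case (Atom X)
    then show ?thesis
      unfolding has_typed_nf_def by auto
  next
    case (Imp B C)
    with less.hyps have "qEc B u \<Longrightarrow> has_typed_nf B u"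
      and "qEc C u \<Longrightarrow> has_typed_nf C u"
        "neutral u \<Longrightarrow> normal u \<Longrightarrow> typing [] u C \<Longrightarrow> qEc C u"
      and "qEc B (Const B)" for u
      by (simp_all add: typing.tConst)
    with Imp show ?thesis
      using has_typed_nf_Imp qEc_Imp_neutral by blast
  next
    case (All B)
    with less.hyps have "qEc (instF Y B) u \<Longrightarrow> has_typed_nf (instF Y B) u"
        "neutral u \<Longrightarrow> normal u \<Longrightarrow> typing [] u (instF Y B) \<Longrightarrow> qEc (instF Y B) u" for Y u
      by simp_all
    with All show ?thesis
      using has_typed_nf_All qEc_All_neutral by blast
  qed
qed

lemma qEc_has_typed_nf: "qEc A t \<Longrightarrow> has_typed_nf A t"
  using qEc_reify_reflect by blast

lemma qEc_neutral: "neutral n \<Longrightarrow> normal n \<Longrightarrow> typing [] n A \<Longrightarrow> qEc A n"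
  using qEc_reify_reflect by blast

lemma qEv_normalizes:
  assumes "qEv \<Gamma> t A"
  shows "\<exists>s. betas t s \<and> normal s \<and> typing \<Gamma> s A"
proof -
  define \<sigma> where "\<sigma> i = (if i < length \<Gamma> then map Const \<Gamma> ! i else Var i)" for i
  from assms have valid: "qEc A (substV (\<lambda>i. if i < length ts then ts ! i else Var i) t)"
    if "length ts = length \<Gamma>" "\<forall>i<length \<Gamma>. closed (ts ! i) \<and> qEc (\<Gamma> ! i) (ts ! i)" for ts
    using that unfolding qEv_def by blast
  have "qEc A (substV \<sigma> t)"
    using valid[of "map Const \<Gamma>"] unfolding \<sigma>_def
    by (simp add: closed_def qEc_neutral typing.tConst)
  then obtain u where u: "betas (substV \<sigma> t) u" "normal u" "typing [] u A"
    using qEc_has_typed_nf unfolding has_typed_nf_def by blast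
  have "inert \<sigma>"
    unfolding inert_def \<sigma>_def by auto
  with u(1) obtain s where s: "betas t s" "u = substV \<sigma> s"
    using betas_substV_inertD by blast
  have "reflects_typing \<Gamma> [] \<sigma>"
    unfolding reflects_typing_def \<sigma>_def by auto
  with s u show ?thesis
    using normal_substVD typing_substV_reflect by blast
qed

theorem mainTheorem1:
  fixes S :: "nat set" and \<Gamma> :: "form list" and t :: trm and A :: form
  assumes "tfv t \<subseteq> {..<length \<Gamma>}"
    and "Evalid S \<Gamma> t A"
  shows "\<exists>s. normal s \<and> proof_term S s \<and> betas t s \<and> typing \<Gamma> s A"
proof -
  \<comment> \<open>The first hypothesis is subsumed by \<open>qEv\<close>.\<close>
  from assms(2) have "proof_term S t" and "qEv \<Gamma> t A"
    unfolding Evalid_def by simp_all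
  then show ?thesis
    using qEv_normalizes betas_ptd unfolding proof_term_def by blast
qed

end
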